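(* Let $g$ and $\hat g$ be metrics on an $(n+1)$-manifold with $g=\hat g+\mathcal H\,k\otimes k$, where $k$ is a one-form that is null and affinely geodesic for $g$ ($g^{\alpha\beta}k_\alpha k_\beta=0$, $k^\alpha\nabla_\alpha k_\beta=0$, indices raised with $g$, $\nabla$ the Levi-Civita connection of $g$) and $\mathcal H$ is a function. Let $h^\alpha{}_\beta$ be a projector field with $h_{\alpha\beta}$ symmetric and $h^\alpha{}_\beta k_\alpha=0$. Then the Riemann tensors $R$ of $g$ and $\hat R$ of $\hat g$ satisfy $\hat R^\mu{}_{\alpha\nu\beta}h^\delta{}_\mu h^\nu{}_\gamma h^\alpha{}_\lambda h^\beta{}_\sigma=R^\mu{}_{\alpha\nu\beta}h^\delta{}_\mu h^\nu{}_\gamma h^\alpha{}_\lambda h^\beta{}_\sigma-2\mathcal H\,h^{\delta\tau}h^\nu{}_\gamma h^\alpha{}_\lambda h^\beta{}_\sigma\big(\nabla_{[\nu|}k_{[\tau}\nabla_{\alpha]}k_{|\beta]}+\nabla_{[\nu}k_{\beta]}\nabla_{[\alpha}k_{\tau]}\big)$.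
   Context: Square brackets denote antisymmetrization; vertical bars exclude indices from it, so the first term is antisymmetrized in the pair $(\nu,\beta)$ and in the pair $(\tau,\alpha)$. *)

theory Defs
  imports "HOL-Analysis.Analysis"
begin

text \<open>Local coordinate rendering: a chart domain U (open) in real^'n, where
  CARD('n) = n+1 is the manifold dimension.
  Lower-index objects carry lower indices, h x $ a $ b stands for h^a_b.\<close>

definition pd :: "(real^'n \<Rightarrow> real) \<Rightarrow> 'n \<Rightarrow> real^'n \<Rightarrow> real" where
  "pd f i x = frechet_derivative f (at x) (axis i 1)"

fun Ck :: "nat \<Rightarrow> (real^'n) set \<Rightarrow> (real^'n \<Rightarrow> real) \<Rightarrow> bool" where
  "Ck 0 U f = continuous_on U f"
| "Ck (Suc m) U f = ((\<forall>x\<in>U. f differentiable (at x)) \<and> (\<forall>i. Ck m U (pd f i)))"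

definition smooth_on :: "(real^'n) set \<Rightarrow> (real^'n \<Rightarrow> real) \<Rightarrow> bool" where
  "smooth_on U f = (\<forall>m. Ck m U f)"

definition metric_on :: "(real^'n) set \<Rightarrow> (real^'n \<Rightarrow> real^'n^'n) \<Rightarrow> bool" where
  "metric_on U g = ((\<forall>a b. smooth_on U (\<lambda>y. g y $ a $ b)) \<and>
     (\<forall>x\<in>U. \<forall>a b. g x $ a $ b = g x $ b $ a) \<and> (\<forall>x\<in>U. det (g x) \<noteq> 0))"

definition ginv :: "(real^'n \<Rightarrow> real^'n^'n) \<Rightarrow> real^'n \<Rightarrow> 'n \<Rightarrow> 'n \<Rightarrow> real" where
  "ginv g x a b = matrix_inv (g x) $ a $ b"

definition chr :: "(real^'n \<Rightarrow> real^'n^'n) \<Rightarrow> real^'n \<Rightarrow> 'n \<Rightarrow> 'n \<Rightarrow> 'n \<Rightarrow> real" where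
  "chr g x a b c = (1/2) * (\<Sum>d\<in>UNIV. ginv g x a d *
     (pd (\<lambda>y. g y $ d $ c) b x + pd (\<lambda>y. g y $ d $ b) c x - pd (\<lambda>y. g y $ b $ c) d x))"

text \<open>Riemann tensor R^m_{a n b} = d_n Gamma^m_ab - d_b Gamma^m_an
  + Gamma^m_nl Gamma^l_ab - Gamma^m_bl Gamma^l_an, i.e. R^m_{anb} V^a = [nabla_n, nabla_b] V^m.\<close>
definition riem :: "(real^'n \<Rightarrow> real^'n^'n) \<Rightarrow> real^'n \<Rightarrow> 'n \<Rightarrow> 'n \<Rightarrow> 'n \<Rightarrow> 'n \<Rightarrow> real" where
  "riem g x m a n b =
     pd (\<lambda>y. chr g y m a b) n x - pd (\<lambda>y. chr g y m a n) b x
     + (\<Sum>l\<in>UNIV. chr g x m n l * chr g x l a b - chr g x m b l * chr g x l a n)"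

definition covd1 :: "(real^'n \<Rightarrow> real^'n^'n) \<Rightarrow> (real^'n \<Rightarrow> real^'n) \<Rightarrow> real^'n \<Rightarrow> 'n \<Rightarrow> 'n \<Rightarrow> real" where
  "covd1 g k x a b = pd (\<lambda>y. k y $ b) a x - (\<Sum>l\<in>UNIV. chr g x l a b * k x $ l)"

definition raise1 :: "(real^'n \<Rightarrow> real^'n^'n) \<Rightarrow> (real^'n \<Rightarrow> real^'n) \<Rightarrow> real^'n \<Rightarrow> 'n \<Rightarrow> real" where
  "raise1 g k x a = (\<Sum>b\<in>UNIV. ginv g x a b * k x $ b)"

end

theory Submission
  imports Defs
begin

(* Since k is null for g, the inverse of g - H k\<otimes>k is g\<inverse> + H k\<sharp>\<otimes>k\<sharp>.  Writing both
   curvature tensors through the Christoffel symbols of the first kind, their difference becomes an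
   explicit polynomial in H, k and their first two derivatives.  Each monomial with an
   undifferentiated factor k in one of the four slots is killed by the projectors, because h
   annihilates k; what survives is the quadratic expression in \<nabla>k. *)

lemma pd_eq_of_has_derivative: "(f has_derivative f') (at x) \<Longrightarrow> pd f i x = f' (axis i 1)"
  unfolding pd_def using frechet_derivative_at by metis

lemma pd_const: "pd (\<lambda>y. c) i x = 0"
  by (rule pd_eq_of_has_derivative[OF has_derivative_const, simplified])

lemma pd_add:
  assumes "f differentiable (at x)" "g differentiable (at x)"
  shows "pd (\<lambda>y. f y + g y) i x = pd f i x + pd g i x"
  using pd_eq_of_has_derivative[OF has_derivative_add[OF assms[unfolded frechet_derivative_works]]]
  by (simp add: pd_def)

lemma pd_diff:
  assumes "f differentiable (at x)" "g differentiable (at x)"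
  shows "pd (\<lambda>y. f y - g y) i x = pd f i x - pd g i x"
  using pd_eq_of_has_derivative[OF has_derivative_diff[OF assms[unfolded frechet_derivative_works]]]
  by (simp add: pd_def)

lemma pd_mult:
  assumes "f differentiable (at x)" "g differentiable (at x)"
  shows "pd (\<lambda>y. f y * g y) i x = pd f i x * g x + f x * pd g i x"
  using pd_eq_of_has_derivative[OF has_derivative_mult[OF assms[unfolded frechet_derivative_works]]]
  by (simp add: pd_def algebra_simps)

lemma pd_cmult: "f differentiable (at x) \<Longrightarrow> pd (\<lambda>y. c * f y) i x = c * pd f i x"
  using pd_mult[of "\<lambda>y. c" x f i] by (simp add: pd_const)

lemma pd_mult3:
  assumes "f differentiable (at x)" "g differentiable (at x)" "h differentiable (at x)"
  shows "pd (\<lambda>y. f y * g y * h y) i x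
    = pd f i x * g x * h x + f x * pd g i x * h x + f x * g x * pd h i x"
  using assms by (simp add: pd_mult differentiable_mult algebra_simps)

lemma pd_sum:
  assumes "finite S" "\<And>j. j \<in> S \<Longrightarrow> f j differentiable (at x)"
  shows "pd (\<lambda>y. \<Sum>j\<in>S. f j y) i x = (\<Sum>j\<in>S. pd (f j) i x)"
proof -
  have "((\<lambda>y. \<Sum>j\<in>S. f j y) has_derivative (\<lambda>v. \<Sum>j\<in>S. frechet_derivative (f j) (at x) v)) (at x)"
    using assms(2) by (intro has_derivative_sum) (simp add: frechet_derivative_works)
  from pd_eq_of_has_derivative[OF this] show ?thesis by (simp add: pd_def)
qed

lemma pd_transform_within_open:
  assumes "open U" "x \<in> U" "\<And>y. y \<in> U \<Longrightarrow> f y = g y"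
  shows "pd f i x = pd g i x"
proof -
  have "(f has_derivative f') (at x) \<longleftrightarrow> (g has_derivative f') (at x)" for f'
    using assms by (metis has_derivative_transform_within_open)
  then show ?thesis unfolding pd_def frechet_derivative_def by simp
qed

lemma differentiable_transform_within_open:
  assumes "f differentiable (at x)" "open U" "x \<in> U" "\<And>y. y \<in> U \<Longrightarrow> f y = g y"
  shows "g differentiable (at x)"
  using assms unfolding differentiable_def by (metis has_derivative_transform_within_open)

lemma smooth_on_imp_differentiable: "smooth_on U f \<Longrightarrow> y \<in> U \<Longrightarrow> f differentiable (at y)"
  unfolding smooth_on_def by (metis Ck.simps(2))

lemma smooth_on_pd: "smooth_on U f \<Longrightarrow> smooth_on U (pd f i)"
  unfolding smooth_on_def by (metis Ck.simps(2))

lemma differentiable_prod: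
  fixes f :: "'i \<Rightarrow> 'a::real_normed_vector \<Rightarrow> 'b::real_normed_field"
  assumes "finite S" "\<And>j. j \<in> S \<Longrightarrow> f j differentiable (at x)"
  shows "(\<lambda>y. \<Prod>j\<in>S. f j y) differentiable (at x)"
  using assms by (induction S rule: finite_induct) simp_all

lemma det_differentiable:
  fixes M :: "'a::real_normed_vector \<Rightarrow> real^'n^'n"
  assumes "\<And>i j. (\<lambda>z. M z $ i $ j) differentiable (at y)"
  shows "(\<lambda>z. det (M z)) differentiable (at y)"
  unfolding det_def
  by (intro differentiable_sum ballI differentiable_mult differentiable_const differentiable_prod
      assms finite)


lemma matrix_inv_right_left:
  fixes A :: "'a::semiring_1^'n^'m"
  assumes "invertible A"
  shows matrix_inv_right: "A ** matrix_inv A = mat 1"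
    and matrix_inv_left: "matrix_inv A ** A = mat 1"
proof -
  have "\<exists>A'. A ** A' = mat 1 \<and> A' ** A = mat 1" using assms unfolding invertible_def .
  then have "A ** matrix_inv A = mat 1 \<and> matrix_inv A ** A = mat 1"
    unfolding matrix_inv_def by (rule someI_ex)
  then show "A ** matrix_inv A = mat 1" "matrix_inv A ** A = mat 1" by auto
qed

lemma matrix_inv_unique:
  fixes A :: "'a::semiring_1^'n^'m"
  assumes "invertible A" "A ** B = mat 1"
  shows "matrix_inv A = B"
proof -
  have "B = (matrix_inv A ** A) ** B" by (simp add: matrix_inv_left[OF assms(1)] matrix_mul_lid)
  also have "\<dots> = matrix_inv A" by (simp add: matrix_mul_assoc[symmetric] assms(2) matrix_mul_rid)
  finally show ?thesis by simp
qed

lemma matrix_inv_transpose_symmetric: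
  fixes A :: "'a::comm_semiring_1^'n^'n"
  assumes "invertible A" "transpose A = A"
  shows "transpose (matrix_inv A) = matrix_inv A"
proof -
  have "A ** transpose (matrix_inv A) = mat 1"
    by (metis matrix_inv_left[OF assms(1)] matrix_transpose_mul assms(2) transpose_mat)
  then have "matrix_inv A = transpose (matrix_inv A)"
    by (rule matrix_inv_unique[OF assms(1)])
  then show ?thesis ..
qed

lemma matrix_inv_cramer:
  fixes A :: "'a::field^'n^'n"
  assumes "det A \<noteq> 0"
  shows "matrix_inv A $ a $ b = det (\<chi> i j. if j = a then axis b 1 $ i else A $ i $ j) / det A"
proof -
  define x where "x = matrix_inv A *v axis b 1"
  have "A *v x = axis b 1"
    using assms unfolding x_def
    by (simp add: matrix_vector_mul_assoc matrix_inv_right invertible_det_nz matrix_vector_mul_lid)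
  then have "x $ a = det (\<chi> i j. if j = a then axis b 1 $ i else A $ i $ j) / det A"
    using cramer[OF assms] by simp
  moreover have "x $ a = matrix_inv A $ a $ b"
    unfolding x_def by (simp add: matrix_vector_mult_def axis_def if_distrib cong: if_cong)
  ultimately show ?thesis by simp
qed

lemma matrix_mul_nth: "((A::'a::semiring_1^'n^'m) ** B) $ i $ j = (\<Sum>k\<in>UNIV. A $ i $ k * B $ k $ j)"
  by (simp add: matrix_matrix_mult_def)

lemma mat_1_nth: "(mat 1 :: 'a::zero_neq_one^'n^'n) $ i $ j = (if i = j then 1 else 0)"
  by (simp add: mat_def)


lemma raised_projector_annihilates:
  fixes gm hm :: "'a::field^'n^'n" and kv :: "'a^'n"
  assumes gm: "invertible gm" "transpose gm = gm"
    and gh_sym: "transpose (gm ** hm) = gm ** hm"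
    and hk: "\<And>b. (\<Sum>a\<in>UNIV. hm $ a $ b * kv $ a) = 0"
  shows "(\<Sum>\<mu>\<in>UNIV. hm $ d $ \<mu> * (\<Sum>b\<in>UNIV. matrix_inv gm $ \<mu> $ b * kv $ b)) = 0"
proof -
  define Gm where "Gm = matrix_inv gm"
  define S where "S = gm ** hm"
  have hm: "hm = Gm ** S"
    unfolding Gm_def S_def by (simp add: matrix_mul_assoc matrix_inv_left[OF gm(1)] matrix_mul_lid)
  have Gm_sym: "transpose Gm = Gm"
    unfolding Gm_def by (rule matrix_inv_transpose_symmetric[OF gm])
  have hG_sym: "(hm ** Gm) $ i $ j = (hm ** Gm) $ j $ i" for i j
  proof -
    have "transpose (hm ** Gm) = transpose Gm ** transpose S ** transpose Gm"
      unfolding hm by (simp only: matrix_transpose_mul matrix_mul_assoc)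
    also have "\<dots> = hm ** Gm"
      unfolding hm Gm_sym gh_sym[folded S_def] by (simp only: matrix_mul_assoc)
    finally show ?thesis by (metis transpose_def vec_lambda_beta)
  qed
  have "(\<Sum>\<mu>\<in>UNIV. hm $ d $ \<mu> * (\<Sum>b\<in>UNIV. Gm $ \<mu> $ b * kv $ b))
      = (\<Sum>\<mu>\<in>UNIV. \<Sum>b\<in>UNIV. hm $ d $ \<mu> * Gm $ \<mu> $ b * kv $ b)"
    by (simp add: sum_distrib_left mult.assoc)
  also have "\<dots> = (\<Sum>b\<in>UNIV. \<Sum>\<mu>\<in>UNIV. hm $ d $ \<mu> * Gm $ \<mu> $ b * kv $ b)"
    by (rule sum.swap)
  also have "\<dots> = (\<Sum>b\<in>UNIV. (hm ** Gm) $ d $ b * kv $ b)"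
    by (simp only: matrix_mul_nth sum_distrib_right)
  also have "\<dots> = (\<Sum>b\<in>UNIV. (hm ** Gm) $ b $ d * kv $ b)"
    by (simp only: hG_sym[of d])
  also have "\<dots> = (\<Sum>b\<in>UNIV. \<Sum>\<mu>\<in>UNIV. hm $ b $ \<mu> * Gm $ \<mu> $ d * kv $ b)"
    by (simp only: matrix_mul_nth sum_distrib_right)
  also have "\<dots> = (\<Sum>\<mu>\<in>UNIV. \<Sum>b\<in>UNIV. hm $ b $ \<mu> * Gm $ \<mu> $ d * kv $ b)"
    by (rule sum.swap)
  also have "\<dots> = (\<Sum>\<mu>\<in>UNIV. (\<Sum>b\<in>UNIV. hm $ b $ \<mu> * kv $ b) * Gm $ \<mu> $ d)"
    by (simp add: sum_distrib_left sum_distrib_right mult_ac)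
  finally show ?thesis unfolding Gm_def by (simp add: hk)
qed


lemma metric_on_invertible: "metric_on U g \<Longrightarrow> y \<in> U \<Longrightarrow> invertible (g y)"
  unfolding metric_on_def by (simp add: invertible_det_nz)

lemma metric_on_symmetric: "metric_on U g \<Longrightarrow> y \<in> U \<Longrightarrow> g y $ a $ b = g y $ b $ a"
  unfolding metric_on_def by blast

lemma metric_on_smooth: "metric_on U g \<Longrightarrow> smooth_on U (\<lambda>y. g y $ a $ b)"
  unfolding metric_on_def by blast

lemma metric_on_differentiable:
  "metric_on U g \<Longrightarrow> y \<in> U \<Longrightarrow> (\<lambda>z. g z $ a $ b) differentiable (at y)"
  unfolding metric_on_def using smooth_on_imp_differentiable by blast

lemma ginv_symmetric: "metric_on U g \<Longrightarrow> y \<in> U \<Longrightarrow> ginv g y a b = ginv g y b a"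
  using matrix_inv_transpose_symmetric[OF metric_on_invertible, of U g y]
  by (simp add: ginv_def vec_eq_iff transpose_def metric_on_symmetric)

lemma ginv_left_inverse:
  "metric_on U g \<Longrightarrow> y \<in> U \<Longrightarrow> (\<Sum>e\<in>UNIV. ginv g y m e * g y $ e $ f) = (if m = f then 1 else 0)"
  using matrix_inv_left[OF metric_on_invertible, of U g y] unfolding ginv_def
  by (metis mat_1_nth matrix_mul_nth)

lemma ginv_right_inverse:
  "metric_on U g \<Longrightarrow> y \<in> U \<Longrightarrow> (\<Sum>f\<in>UNIV. g y $ e $ f * ginv g y f d) = (if e = d then 1 else 0)"
  using matrix_inv_right[OF metric_on_invertible, of U g y] unfolding ginv_def
  by (metis mat_1_nth matrix_mul_nth)

lemma ginv_differentiable: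
  fixes g :: "real^'n \<Rightarrow> real^'n^'n"
  assumes g: "metric_on U g" and U: "open U" "y \<in> U"
  shows "(\<lambda>z. ginv g z a b) differentiable (at y)"
proof -
  define M where "M = (\<lambda>z. (\<chi> i j. if j = a then axis b 1 $ i else g z $ i $ j) :: real^'n^'n)"
  have "(\<lambda>z. det (M z)) differentiable (at y)"
  proof (rule det_differentiable)
    fix i j
    show "(\<lambda>z. M z $ i $ j) differentiable (at y)"
      by (cases "j = a") (simp_all add: M_def metric_on_differentiable[OF g U(2)])
  qed
  moreover have "(\<lambda>z. det (g z)) differentiable (at y)"
    by (rule det_differentiable) (simp add: metric_on_differentiable[OF g U(2)])
  ultimately have "(\<lambda>z. det (M z) / det (g z)) differentiable (at y)"
    using g U(2) unfolding metric_on_def by (intro differentiable_divide) auto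
  then show ?thesis
    by (rule differentiable_transform_within_open[OF _ U])
      (use g in \<open>simp add: ginv_def M_def matrix_inv_cramer metric_on_def\<close>)
qed

lemma pd_ginv:
  assumes g: "metric_on U g" and U: "open U" "x \<in> U"
  shows "pd (\<lambda>y. ginv g y m d) n x =
     - (\<Sum>e\<in>UNIV. \<Sum>f\<in>UNIV. ginv g x m e * pd (\<lambda>y. g y $ e $ f) n x * ginv g x f d)"
proof -
  define P where "P = (\<lambda>e. pd (\<lambda>y. ginv g y m e) n x)"
  define dg where "dg = (\<lambda>e f. pd (\<lambda>y. g y $ e $ f) n x)"
  have P_g: "(\<Sum>e\<in>UNIV. P e * g x $ e $ f) = - (\<Sum>e\<in>UNIV. ginv g x m e * dg e f)" for f
  proof -
    have "pd (\<lambda>y. \<Sum>e\<in>UNIV. ginv g y m e * g y $ e $ f) n x = pd (\<lambda>y. if m = f then 1 else 0) n x"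
      by (rule pd_transform_within_open[OF U]) (simp add: ginv_left_inverse[OF g])
    moreover have "pd (\<lambda>y. \<Sum>e\<in>UNIV. ginv g y m e * g y $ e $ f) n x
      = (\<Sum>e\<in>UNIV. P e * g x $ e $ f + ginv g x m e * dg e f)"
      unfolding P_def dg_def
      by (simp add: pd_sum pd_mult differentiable_mult ginv_differentiable[OF g U]
          metric_on_differentiable[OF g U(2)])
    ultimately show ?thesis by (simp add: pd_const sum.distrib eq_neg_iff_add_eq_0)
  qed
  have "P d = (\<Sum>e\<in>UNIV. P e * (\<Sum>f\<in>UNIV. g x $ e $ f * ginv g x f d))"
    by (simp add: ginv_right_inverse[OF g U(2)] if_distrib cong: if_cong)
  also have "\<dots> = (\<Sum>e\<in>UNIV. \<Sum>f\<in>UNIV. P e * g x $ e $ f * ginv g x f d)"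
    by (simp add: sum_distrib_left mult.assoc)
  also have "\<dots> = (\<Sum>f\<in>UNIV. \<Sum>e\<in>UNIV. P e * g x $ e $ f * ginv g x f d)"
    by (rule sum.swap)
  also have "\<dots> = - (\<Sum>f\<in>UNIV. \<Sum>e\<in>UNIV. ginv g x m e * dg e f * ginv g x f d)"
    by (simp only: sum_distrib_right[symmetric] P_g) (simp add: sum_distrib_right sum_negf)
  also have "\<dots> = - (\<Sum>e\<in>UNIV. \<Sum>f\<in>UNIV. ginv g x m e * dg e f * ginv g x f d)"
    by (subst sum.swap) simp
  finally show ?thesis unfolding P_def dg_def .
qed


section \<open>Christoffel symbols of the first kind and the Riemann tensor\<close>

text \<open>\<open>E c a b\<close> plays the role of \<open>\<partial>\<^sub>c m\<^sub>a\<^sub>b\<close> for a symmetric tensor \<open>m\<close>.\<close>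

definition lower_christoffel :: "('n \<Rightarrow> 'n \<Rightarrow> 'n \<Rightarrow> real) \<Rightarrow> 'n \<Rightarrow> 'n \<Rightarrow> 'n \<Rightarrow> real" where
  "lower_christoffel E p a b = 1/2 * (E a p b + E b p a - E p a b)"

definition chr1 :: "(real^'n \<Rightarrow> real^'n^'n) \<Rightarrow> real^'n \<Rightarrow> 'n \<Rightarrow> 'n \<Rightarrow> 'n \<Rightarrow> real" where
  "chr1 g y = lower_christoffel (\<lambda>c a b. pd (\<lambda>z. g z $ a $ b) c y)"

definition chr1_product ::
    "('n::finite \<Rightarrow> 'n \<Rightarrow> 'n \<Rightarrow> real) \<Rightarrow> ('n \<Rightarrow> 'n \<Rightarrow> real) \<Rightarrow> 'n \<Rightarrow> 'n \<Rightarrow> 'n \<Rightarrow> 'n \<Rightarrow> real" where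
  "chr1_product L G n p a b = (\<Sum>f\<in>UNIV. \<Sum>e\<in>UNIV. L f n p * G f e * L e a b)"

text \<open>\<open>riem_low L dL G p n a b\<close> is \<open>R\<^sub>p\<^sub>a\<^sub>n\<^sub>b\<close> (note the order of the arguments), computed from
  \<open>\<Gamma>\<^sub>p\<^sub>a\<^sub>b = L p a b\<close>, \<open>\<partial>\<^sub>n \<Gamma>\<^sub>p\<^sub>a\<^sub>b = dL n p a b\<close> and the inverse metric \<open>G\<close>.\<close>

definition riem_low :: "('n::finite \<Rightarrow> 'n \<Rightarrow> 'n \<Rightarrow> real) \<Rightarrow> ('n \<Rightarrow> 'n \<Rightarrow> 'n \<Rightarrow> 'n \<Rightarrow> real)
    \<Rightarrow> ('n \<Rightarrow> 'n \<Rightarrow> real) \<Rightarrow> 'n \<Rightarrow> 'n \<Rightarrow> 'n \<Rightarrow> 'n \<Rightarrow> real" where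
  "riem_low L dL G p n a b =
     dL n p a b - dL b p a n - chr1_product L G n p a b + chr1_product L G b p a n"

lemma differentiable_lower_christoffel:
  "(\<And>c a b. (\<lambda>y. E y c a b) differentiable (at x))
    \<Longrightarrow> (\<lambda>y. lower_christoffel (E y) p a b) differentiable (at x)"
  unfolding lower_christoffel_def by (intro differentiable_mult differentiable_const
      differentiable_add differentiable_diff)

lemma pd_lower_christoffel:
  assumes "\<And>c a b. (\<lambda>y. E y c a b) differentiable (at x)"
  shows "pd (\<lambda>y. lower_christoffel (E y) p a b) n x
    = lower_christoffel (\<lambda>c a b. pd (\<lambda>y. E y c a b) n x) p a b"
  unfolding lower_christoffel_def
  using assms by (simp only: pd_cmult pd_diff pd_add differentiable_add differentiable_diff)

lemma chr_eq_chr1: "chr g y a b c = (\<Sum>d\<in>UNIV. ginv g y a d * chr1 g y d b c)"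
  unfolding chr_def chr1_def lower_christoffel_def by (simp add: sum_distrib_left algebra_simps)

lemma pd_metric_symmetric:
  "metric_on U g \<Longrightarrow> open U \<Longrightarrow> y \<in> U \<Longrightarrow> pd (\<lambda>z. g z $ a $ b) c y = pd (\<lambda>z. g z $ b $ a) c y"
  by (rule pd_transform_within_open) (auto intro: metric_on_symmetric)

lemma pd_metric_eq_chr1:
  "metric_on U g \<Longrightarrow> open U \<Longrightarrow> y \<in> U \<Longrightarrow>
    pd (\<lambda>z. g z $ e $ f) n y = chr1 g y e n f + chr1 g y f n e"
  unfolding chr1_def lower_christoffel_def
  using pd_metric_symmetric[of U g y e f n] pd_metric_symmetric[of U g y e n f]
    pd_metric_symmetric[of U g y n f e]
  by (simp add: algebra_simps)

lemma chr1_symmetric: "metric_on U g \<Longrightarrow> open U \<Longrightarrow> y \<in> U \<Longrightarrow> chr1 g y e a b = chr1 g y e b a"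
  unfolding chr1_def lower_christoffel_def using pd_metric_symmetric[of U g y a b e]
  by (simp add: algebra_simps)

lemma chr1_differentiable:
  "metric_on U g \<Longrightarrow> x \<in> U \<Longrightarrow> (\<lambda>y. chr1 g y d b c) differentiable (at x)"
  unfolding chr1_def lower_christoffel_def
  by (intro differentiable_mult differentiable_const differentiable_add differentiable_diff
      smooth_on_imp_differentiable[OF smooth_on_pd[OF metric_on_smooth]]) auto

lemma covd1_eq_chr1:
  assumes "metric_on U g" "x \<in> U"
  shows "covd1 g k x a b = pd (\<lambda>y. k y $ b) a x - (\<Sum>e\<in>UNIV. raise1 g k x e * chr1 g x e a b)"
proof -
  have "(\<Sum>l\<in>UNIV. chr g x l a b * k x $ l) = (\<Sum>l\<in>UNIV. \<Sum>d\<in>UNIV. ginv g x l d * chr1 g x d a b * k x $ l)"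
    unfolding chr_eq_chr1 by (simp add: sum_distrib_right)
  also have "\<dots> = (\<Sum>d\<in>UNIV. \<Sum>l\<in>UNIV. ginv g x l d * chr1 g x d a b * k x $ l)"
    by (rule sum.swap)
  also have "\<dots> = (\<Sum>e\<in>UNIV. raise1 g k x e * chr1 g x e a b)"
    unfolding raise1_def
    by (rule sum.cong[OF refl])
      (simp add: sum_distrib_left sum_distrib_right ginv_symmetric[OF assms] mult_ac)
  finally show ?thesis unfolding covd1_def by simp
qed

lemma pd_chr:
  assumes g: "metric_on U g" and U: "open U" "x \<in> U"
  shows "pd (\<lambda>y. chr g y m a b) n x = (\<Sum>d\<in>UNIV. pd (\<lambda>y. ginv g y m d) n x * chr1 g x d a b
        + ginv g x m d * pd (\<lambda>y. chr1 g y d a b) n x)"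
  unfolding chr_eq_chr1
  by (simp add: pd_sum pd_mult differentiable_mult ginv_differentiable[OF g U]
      chr1_differentiable[OF g U(2)])

text \<open>In the derivative of \<open>\<Gamma>\<^sup>m\<^sub>a\<^sub>b = G\<^sup>m\<^sup>d L\<^sub>d\<^sub>a\<^sub>b\<close>, the term from \<open>\<partial>G\<close> partly cancels against the quadratic
  term \<open>\<Gamma>\<^sup>m\<^sub>n\<^sub>l \<Gamma>\<^sup>l\<^sub>a\<^sub>b\<close> of the Riemann tensor.\<close>

lemma inverse_derivative_contraction:
  fixes P :: "'n::finite \<Rightarrow> real" and G :: "'n \<Rightarrow> 'n \<Rightarrow> real" and L :: "'n \<Rightarrow> 'n \<Rightarrow> 'n \<Rightarrow> real"
  assumes P: "\<And>d. P d = - (\<Sum>e\<in>UNIV. \<Sum>f\<in>UNIV. G m e * (L e n f + L f n e) * G f d)"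
  shows "(\<Sum>d\<in>UNIV. P d * L d a b) + (\<Sum>l\<in>UNIV. (\<Sum>d\<in>UNIV. G m d * L d n l) * (\<Sum>d\<in>UNIV. G l d * L d a b))
    = - (\<Sum>p\<in>UNIV. G m p * chr1_product L G n p a b)"
proof -
  define C where "C = (\<lambda>f. \<Sum>d\<in>UNIV. G f d * L d a b)"
  have "(\<Sum>d\<in>UNIV. P d * L d a b)
      = - (\<Sum>d\<in>UNIV. \<Sum>e\<in>UNIV. \<Sum>f\<in>UNIV. G m e * (L e n f + L f n e) * G f d * L d a b)"
    by (simp add: P sum_distrib_right sum_negf)
  also have "\<dots> = - (\<Sum>e\<in>UNIV. \<Sum>d\<in>UNIV. \<Sum>f\<in>UNIV. G m e * (L e n f + L f n e) * G f d * L d a b)"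
    by (subst sum.swap) simp
  also have "\<dots> = - (\<Sum>e\<in>UNIV. \<Sum>f\<in>UNIV. \<Sum>d\<in>UNIV. G m e * (L e n f + L f n e) * G f d * L d a b)"
    by (subst (2) sum.swap) simp
  also have "\<dots> = - (\<Sum>e\<in>UNIV. \<Sum>f\<in>UNIV. G m e * (L e n f + L f n e) * C f)"
    by (simp add: C_def sum_distrib_left mult.assoc)
  finally have dG_term: "(\<Sum>d\<in>UNIV. P d * L d a b)
      = - (\<Sum>e\<in>UNIV. \<Sum>f\<in>UNIV. G m e * (L e n f + L f n e) * C f)" .
  have "(\<Sum>l\<in>UNIV. (\<Sum>d\<in>UNIV. G m d * L d n l) * C l) = (\<Sum>l\<in>UNIV. \<Sum>d\<in>UNIV. G m d * L d n l * C l)"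
    by (simp add: sum_distrib_right)
  also have "\<dots> = (\<Sum>e\<in>UNIV. \<Sum>f\<in>UNIV. G m e * L e n f * C f)"
    by (rule sum.swap)
  finally have chr_term: "(\<Sum>l\<in>UNIV. (\<Sum>d\<in>UNIV. G m d * L d n l) * C l)
      = (\<Sum>e\<in>UNIV. \<Sum>f\<in>UNIV. G m e * L e n f * C f)" .
  have "(\<Sum>d\<in>UNIV. P d * L d a b) + (\<Sum>l\<in>UNIV. (\<Sum>d\<in>UNIV. G m d * L d n l) * (\<Sum>d\<in>UNIV. G l d * L d a b))
      = - (\<Sum>e\<in>UNIV. \<Sum>f\<in>UNIV. G m e * (L e n f + L f n e) * C f)
        + (\<Sum>e\<in>UNIV. \<Sum>f\<in>UNIV. G m e * L e n f * C f)"
    using dG_term chr_term by (simp add: C_def)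
  also have "\<dots> = - (\<Sum>e\<in>UNIV. \<Sum>f\<in>UNIV. G m e * L f n e * C f)"
    by (simp add: algebra_simps sum.distrib)
  also have "\<dots> = - (\<Sum>p\<in>UNIV. G m p * chr1_product L G n p a b)"
    unfolding chr1_product_def C_def by (simp add: sum_distrib_left mult.assoc)
  finally show ?thesis .
qed

lemma riem_eq_riem_low:
  assumes g: "metric_on U g" and U: "open U" "x \<in> U"
  shows "riem g x m a n b = (\<Sum>p\<in>UNIV. ginv g x m p *
     riem_low (chr1 g x) (\<lambda>n p a b. pd (\<lambda>y. chr1 g y p a b) n x) (ginv g x) p n a b)"
proof -
  define G where "G = ginv g x"
  define L where "L = chr1 g x"
  define dL where "dL = (\<lambda>n p a b. pd (\<lambda>y. chr1 g y p a b) n x)"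
  define dG where "dG = (\<lambda>n d. pd (\<lambda>y. ginv g y m d) n x)"
  have dG: "dG n' d = - (\<Sum>e\<in>UNIV. \<Sum>f\<in>UNIV. G m e * (L e n' f + L f n' e) * G f d)" for d n'
    unfolding dG_def pd_ginv[OF g U] G_def L_def pd_metric_eq_chr1[OF g U] ..
  have pd_chr: "pd (\<lambda>y. chr g y m a' b') n' x
      = (\<Sum>d\<in>UNIV. dG n' d * L d a' b') + (\<Sum>d\<in>UNIV. G m d * dL n' d a' b')" for a' b' n'
    unfolding pd_chr[OF g U] G_def L_def dL_def dG_def by (simp add: sum.distrib)
  have chr_chr: "(\<Sum>l\<in>UNIV. chr g x m n' l * chr g x l a' b')
      = (\<Sum>l\<in>UNIV. (\<Sum>d\<in>UNIV. G m d * L d n' l) * (\<Sum>d\<in>UNIV. G l d * L d a' b'))" for n' a' b'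
    unfolding chr_eq_chr1 G_def L_def ..
  have contraction_n: "(\<Sum>d\<in>UNIV. dG n d * L d a b)
      + (\<Sum>l\<in>UNIV. (\<Sum>d\<in>UNIV. G m d * L d n l) * (\<Sum>d\<in>UNIV. G l d * L d a b))
    = - (\<Sum>p\<in>UNIV. G m p * chr1_product L G n p a b)"
    by (rule inverse_derivative_contraction) (rule dG)
  have contraction_b: "(\<Sum>d\<in>UNIV. dG b d * L d a n)
      + (\<Sum>l\<in>UNIV. (\<Sum>d\<in>UNIV. G m d * L d b l) * (\<Sum>d\<in>UNIV. G l d * L d a n))
    = - (\<Sum>p\<in>UNIV. G m p * chr1_product L G b p a n)"
    by (rule inverse_derivative_contraction) (rule dG)
  have "riem g x m a n b
     = ((\<Sum>d\<in>UNIV. dG n d * L d a b) + (\<Sum>l\<in>UNIV. (\<Sum>d\<in>UNIV. G m d * L d n l) * (\<Sum>d\<in>UNIV. G l d * L d a b)))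
     - ((\<Sum>d\<in>UNIV. dG b d * L d a n) + (\<Sum>l\<in>UNIV. (\<Sum>d\<in>UNIV. G m d * L d b l) * (\<Sum>d\<in>UNIV. G l d * L d a n)))
     + (\<Sum>d\<in>UNIV. G m d * dL n d a b) - (\<Sum>d\<in>UNIV. G m d * dL b d a n)"
    unfolding riem_def pd_chr sum_subtractf chr_chr by simp
  also have "\<dots> = (\<Sum>p\<in>UNIV. G m p * riem_low L dL G p n a b)"
    unfolding contraction_n contraction_b riem_low_def
    by (simp add: algebra_simps sum.distrib sum_subtractf)
  finally show ?thesis unfolding G_def L_def dL_def .
qed


section \<open>Contractions annihilating \<open>k\<close>\<close>

definition k_divisible :: "('n \<Rightarrow> real) \<Rightarrow> ('n \<Rightarrow> 'n \<Rightarrow> 'n \<Rightarrow> 'n \<Rightarrow> real) \<Rightarrow> bool" where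
  "k_divisible kk F \<longleftrightarrow> (\<exists>Xp Xn Xa Xb. \<forall>p n a b.
      F p n a b = kk p * Xp n a b + kk n * Xn p a b + kk a * Xa p n b + kk b * Xb p n a)"

definition contract4 :: "('n::finite \<Rightarrow> real) \<Rightarrow> ('n \<Rightarrow> real) \<Rightarrow> ('n \<Rightarrow> real) \<Rightarrow> ('n \<Rightarrow> real)
    \<Rightarrow> ('n \<Rightarrow> 'n \<Rightarrow> 'n \<Rightarrow> 'n \<Rightarrow> real) \<Rightarrow> real" where
  "contract4 q v u w F =
     (\<Sum>p\<in>UNIV. \<Sum>n\<in>UNIV. \<Sum>a\<in>UNIV. \<Sum>b\<in>UNIV. q p * v n * u a * w b * F p n a b)"

lemma k_divisibleI:
  assumes "\<And>p n a b. F p n a b = kk p * Xp n a b + kk n * Xn p a b + kk a * Xa p n b + kk b * Xb p n a"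
  shows "k_divisible kk F"
  unfolding k_divisible_def using assms by blast

lemma k_divisible_add:
  assumes "k_divisible kk F" "k_divisible kk F'"
  shows "k_divisible kk (\<lambda>p n a b. F p n a b + F' p n a b)"
proof -
  obtain X1 X2 X3 X4 where X: "\<And>p n a b.
      F p n a b = kk p * X1 n a b + kk n * X2 p a b + kk a * X3 p n b + kk b * X4 p n a"
    using assms(1) unfolding k_divisible_def by blast
  obtain Y1 Y2 Y3 Y4 where Y: "\<And>p n a b.
      F' p n a b = kk p * Y1 n a b + kk n * Y2 p a b + kk a * Y3 p n b + kk b * Y4 p n a"
    using assms(2) unfolding k_divisible_def by blast
  show ?thesis
    by (rule k_divisibleI[where Xp = "\<lambda>n a b. X1 n a b + Y1 n a b" and Xn = "\<lambda>p a b. X2 p a b + Y2 p a b"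
        and Xa = "\<lambda>p n b. X3 p n b + Y3 p n b" and Xb = "\<lambda>p n a. X4 p n a + Y4 p n a"])
      (simp add: X Y algebra_simps)
qed

lemma k_divisible_uminus:
  assumes "k_divisible kk F"
  shows "k_divisible kk (\<lambda>p n a b. - F p n a b)"
proof -
  obtain X1 X2 X3 X4 where X: "\<And>p n a b.
      F p n a b = kk p * X1 n a b + kk n * X2 p a b + kk a * X3 p n b + kk b * X4 p n a"
    using assms unfolding k_divisible_def by blast
  show ?thesis
    by (rule k_divisibleI[where Xp = "\<lambda>n a b. - X1 n a b" and Xn = "\<lambda>p a b. - X2 p a b"
        and Xa = "\<lambda>p n b. - X3 p n b" and Xb = "\<lambda>p n a. - X4 p n a"])
      (simp add: X algebra_simps)
qed

lemma k_divisible_diff: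
  "k_divisible kk F \<Longrightarrow> k_divisible kk F' \<Longrightarrow> k_divisible kk (\<lambda>p n a b. F p n a b - F' p n a b)"
  using k_divisible_add[OF _ k_divisible_uminus] by simp

lemma k_divisible_swap:
  assumes "k_divisible kk F"
  shows "k_divisible kk (\<lambda>p n a b. F p b a n)"
proof -
  obtain X1 X2 X3 X4 where X: "\<And>p n a b.
      F p n a b = kk p * X1 n a b + kk n * X2 p a b + kk a * X3 p n b + kk b * X4 p n a"
    using assms unfolding k_divisible_def by blast
  show ?thesis
    by (rule k_divisibleI[where Xp = "\<lambda>n a b. X1 b a n" and Xn = "\<lambda>p a b. X4 p b a"
        and Xa = "\<lambda>p n b. X3 p b n" and Xb = "\<lambda>p n a. X2 p a n"])
      (simp add: X algebra_simps)
qed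

lemma contract4_add:
  "contract4 q v u w (\<lambda>p n a b. F p n a b + F' p n a b) = contract4 q v u w F + contract4 q v u w F'"
  unfolding contract4_def by (simp add: algebra_simps sum.distrib)

lemma contract4_linear:
  "contract4 q v u w (\<lambda>p n a b. F p n a b - F' p n a b + c * F'' p n a b)
   = contract4 q v u w F - contract4 q v u w F' + c * contract4 q v u w F''"
  unfolding contract4_def by (simp add: algebra_simps sum.distrib sum_subtractf sum_distrib_left)

lemma contract4_k_divisible:
  assumes "k_divisible kk F"
    and q: "(\<Sum>p\<in>UNIV. q p * kk p) = 0" and v: "(\<Sum>p\<in>UNIV. v p * kk p) = 0"
    and u: "(\<Sum>p\<in>UNIV. u p * kk p) = 0" and w: "(\<Sum>p\<in>UNIV. w p * kk p) = 0"
  shows "contract4 q v u w F = 0"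
proof -
  obtain X1 X2 X3 X4 where F: "\<And>p n a b.
      F p n a b = kk p * X1 n a b + kk n * X2 p a b + kk a * X3 p n b + kk b * X4 p n a"
    using assms(1) unfolding k_divisible_def by blast
  have "contract4 q v u w (\<lambda>p n a b. kk p * X1 n a b)
      = (\<Sum>p\<in>UNIV. q p * kk p * (\<Sum>n\<in>UNIV. \<Sum>a\<in>UNIV. \<Sum>b\<in>UNIV. v n * u a * w b * X1 n a b))"
    unfolding contract4_def by (simp add: sum_distrib_left mult_ac)
  then have 1: "contract4 q v u w (\<lambda>p n a b. kk p * X1 n a b) = 0"
    by (simp add: sum_distrib_right[symmetric] q)
  have "contract4 q v u w (\<lambda>p n a b. kk n * X2 p a b)
      = (\<Sum>p\<in>UNIV. q p * (\<Sum>n\<in>UNIV. v n * kk n * (\<Sum>a\<in>UNIV. \<Sum>b\<in>UNIV. u a * w b * X2 p a b)))"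
    unfolding contract4_def by (simp add: sum_distrib_left mult_ac)
  then have 2: "contract4 q v u w (\<lambda>p n a b. kk n * X2 p a b) = 0"
    by (simp add: sum_distrib_right[symmetric] v)
  have "contract4 q v u w (\<lambda>p n a b. kk a * X3 p n b)
      = (\<Sum>p\<in>UNIV. \<Sum>n\<in>UNIV. q p * v n * (\<Sum>a\<in>UNIV. u a * kk a * (\<Sum>b\<in>UNIV. w b * X3 p n b)))"
    unfolding contract4_def by (simp add: sum_distrib_left mult_ac)
  then have 3: "contract4 q v u w (\<lambda>p n a b. kk a * X3 p n b) = 0"
    by (simp add: sum_distrib_right[symmetric] u)
  have "contract4 q v u w (\<lambda>p n a b. kk b * X4 p n a)
      = (\<Sum>p\<in>UNIV. \<Sum>n\<in>UNIV. \<Sum>a\<in>UNIV. q p * v n * u a * (\<Sum>b\<in>UNIV. w b * kk b * X4 p n a))"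
    unfolding contract4_def by (simp add: sum_distrib_left mult_ac)
  then have 4: "contract4 q v u w (\<lambda>p n a b. kk b * X4 p n a) = 0"
    by (simp add: sum_distrib_right[symmetric] w)
  have "F = (\<lambda>p n a b. kk p * X1 n a b + kk n * X2 p a b + kk a * X3 p n b + kk b * X4 p n a)"
    using F by (intro ext) simp
  then show ?thesis using 1 2 3 4 by (simp add: contract4_add)
qed

lemma contract_first_index_eq_contract4:
  fixes X :: "'a::finite \<Rightarrow> 'a \<Rightarrow> real" and F :: "'a \<Rightarrow> 'a \<Rightarrow> 'a \<Rightarrow> 'a \<Rightarrow> real"
  shows "(\<Sum>\<mu>\<in>UNIV. \<Sum>\<alpha>\<in>UNIV. \<Sum>\<nu>\<in>UNIV. \<Sum>\<beta>\<in>UNIV.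
            (\<Sum>p\<in>UNIV. X \<mu> p * F p \<nu> \<alpha> \<beta>) * c \<mu> * v \<nu> * u \<alpha> * w \<beta>)
       = contract4 (\<lambda>p. \<Sum>\<mu>\<in>UNIV. c \<mu> * X \<mu> p) v u w F"
proof -
  define \<Phi> where "\<Phi> = (\<lambda>\<mu> \<alpha> \<nu> \<beta> p. c \<mu> * X \<mu> p * v \<nu> * u \<alpha> * w \<beta> * F p \<nu> \<alpha> \<beta>)"
  have "(\<Sum>\<mu>\<in>UNIV. \<Sum>\<alpha>\<in>UNIV. \<Sum>\<nu>\<in>UNIV. \<Sum>\<beta>\<in>UNIV.
            (\<Sum>p\<in>UNIV. X \<mu> p * F p \<nu> \<alpha> \<beta>) * c \<mu> * v \<nu> * u \<alpha> * w \<beta>)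
     = (\<Sum>\<mu>\<in>UNIV. \<Sum>\<alpha>\<in>UNIV. \<Sum>\<nu>\<in>UNIV. \<Sum>\<beta>\<in>UNIV. \<Sum>p\<in>UNIV. \<Phi> \<mu> \<alpha> \<nu> \<beta> p)"
    unfolding \<Phi>_def by (intro sum.cong refl) (simp add: sum_distrib_left sum_distrib_right mult_ac)
  also have "\<dots> = (\<Sum>\<mu>\<in>UNIV. \<Sum>\<alpha>\<in>UNIV. \<Sum>\<nu>\<in>UNIV. \<Sum>p\<in>UNIV. \<Sum>\<beta>\<in>UNIV. \<Phi> \<mu> \<alpha> \<nu> \<beta> p)"
    by (rule sum.cong[OF refl], rule sum.cong[OF refl], rule sum.cong[OF refl], rule sum.swap)
  also have "\<dots> = (\<Sum>\<mu>\<in>UNIV. \<Sum>\<alpha>\<in>UNIV. \<Sum>p\<in>UNIV. \<Sum>\<nu>\<in>UNIV. \<Sum>\<beta>\<in>UNIV. \<Phi> \<mu> \<alpha> \<nu> \<beta> p)"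
    by (rule sum.cong[OF refl], rule sum.cong[OF refl], rule sum.swap)
  also have "\<dots> = (\<Sum>\<mu>\<in>UNIV. \<Sum>p\<in>UNIV. \<Sum>\<alpha>\<in>UNIV. \<Sum>\<nu>\<in>UNIV. \<Sum>\<beta>\<in>UNIV. \<Phi> \<mu> \<alpha> \<nu> \<beta> p)"
    by (rule sum.cong[OF refl], rule sum.swap)
  also have "\<dots> = (\<Sum>p\<in>UNIV. \<Sum>\<mu>\<in>UNIV. \<Sum>\<alpha>\<in>UNIV. \<Sum>\<nu>\<in>UNIV. \<Sum>\<beta>\<in>UNIV. \<Phi> \<mu> \<alpha> \<nu> \<beta> p)"
    by (rule sum.swap)
  also have "\<dots> = (\<Sum>p\<in>UNIV. \<Sum>\<alpha>\<in>UNIV. \<Sum>\<mu>\<in>UNIV. \<Sum>\<nu>\<in>UNIV. \<Sum>\<beta>\<in>UNIV. \<Phi> \<mu> \<alpha> \<nu> \<beta> p)"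
    by (rule sum.cong[OF refl], rule sum.swap)
  also have "\<dots> = (\<Sum>p\<in>UNIV. \<Sum>\<alpha>\<in>UNIV. \<Sum>\<nu>\<in>UNIV. \<Sum>\<mu>\<in>UNIV. \<Sum>\<beta>\<in>UNIV. \<Phi> \<mu> \<alpha> \<nu> \<beta> p)"
    by (rule sum.cong[OF refl], rule sum.cong[OF refl], rule sum.swap)
  also have "\<dots> = (\<Sum>p\<in>UNIV. \<Sum>\<alpha>\<in>UNIV. \<Sum>\<nu>\<in>UNIV. \<Sum>\<beta>\<in>UNIV. \<Sum>\<mu>\<in>UNIV. \<Phi> \<mu> \<alpha> \<nu> \<beta> p)"
    by (rule sum.cong[OF refl], rule sum.cong[OF refl], rule sum.cong[OF refl], rule sum.swap)
  also have "\<dots> = (\<Sum>p\<in>UNIV. \<Sum>\<nu>\<in>UNIV. \<Sum>\<alpha>\<in>UNIV. \<Sum>\<beta>\<in>UNIV. \<Sum>\<mu>\<in>UNIV. \<Phi> \<mu> \<alpha> \<nu> \<beta> p)"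
    by (rule sum.cong[OF refl], rule sum.swap)
  also have "\<dots> = contract4 (\<lambda>p. \<Sum>\<mu>\<in>UNIV. c \<mu> * X \<mu> p) v u w F"
    unfolding contract4_def \<Phi>_def by (simp only: sum_distrib_right)
  finally show ?thesis .
qed


section \<open>The Kerr--Schild perturbation of the curvature\<close>

text \<open>\<open>ks_d1\<close> and \<open>ks_d2\<close> are \<open>\<partial>\<^sub>c (H k\<^sub>a k\<^sub>b)\<close> and \<open>\<partial>\<^sub>n \<partial>\<^sub>c (H k\<^sub>a k\<^sub>b)\<close>, expressed through the jets
  \<open>Hx = H\<close>, \<open>dH c = \<partial>\<^sub>c H\<close>, \<open>ddH n c = \<partial>\<^sub>n \<partial>\<^sub>c H\<close>, \<open>kk a = k\<^sub>a\<close>, \<open>dk c a = \<partial>\<^sub>c k\<^sub>a\<close>,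
  \<open>ddk n c a = \<partial>\<^sub>n \<partial>\<^sub>c k\<^sub>a\<close> at a point.\<close>

definition ks_d1 :: "('n \<Rightarrow> real) \<Rightarrow> real \<Rightarrow> ('n \<Rightarrow> real) \<Rightarrow> ('n \<Rightarrow> 'n \<Rightarrow> real) \<Rightarrow> 'n \<Rightarrow> 'n \<Rightarrow> 'n \<Rightarrow> real"
  where "ks_d1 kk Hx dH dk c a b = dH c * kk a * kk b + Hx * dk c a * kk b + Hx * kk a * dk c b"

definition ks_d2 :: "('n \<Rightarrow> real) \<Rightarrow> real \<Rightarrow> ('n \<Rightarrow> real) \<Rightarrow> ('n \<Rightarrow> 'n \<Rightarrow> real) \<Rightarrow> ('n \<Rightarrow> 'n \<Rightarrow> real)
    \<Rightarrow> ('n \<Rightarrow> 'n \<Rightarrow> 'n \<Rightarrow> real) \<Rightarrow> 'n \<Rightarrow> 'n \<Rightarrow> 'n \<Rightarrow> 'n \<Rightarrow> real" where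
  "ks_d2 kk Hx dH ddH dk ddk n c a b =
     ddH n c * kk a * kk b + dH c * dk n a * kk b + dH c * kk a * dk n b
   + dH n * dk c a * kk b + Hx * ddk n c a * kk b + Hx * dk c a * dk n b
   + dH n * kk a * dk c b + Hx * dk n a * dk c b + Hx * kk a * ddk n c b"

definition dk_quadratic :: "('n \<Rightarrow> 'n \<Rightarrow> real) \<Rightarrow> 'n \<Rightarrow> 'n \<Rightarrow> 'n \<Rightarrow> 'n \<Rightarrow> real" where
  "dk_quadratic D p n a b =
     (1/4) * (D n p * D a b - D b p * D a n - D n a * D p b + D b a * D p n)
   + (1/4) * (D n b - D b n) * (D a p - D p a)"

lemma bilinear_form_shift:
  fixes L1 L2 kk K :: "'n::finite \<Rightarrow> real" and G :: "'n \<Rightarrow> 'n \<Rightarrow> real"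
  assumes G_sym: "\<And>a b. G a b = G b a" and K: "\<And>a. K a = (\<Sum>b\<in>UNIV. G a b * kk b)"
    and null: "(\<Sum>a\<in>UNIV. kk a * K a) = 0"
  shows "(\<Sum>f\<in>UNIV. \<Sum>e\<in>UNIV. (L1 f - c * kk f) * G f e * (L2 e - d * kk e))
    = (\<Sum>f\<in>UNIV. \<Sum>e\<in>UNIV. L1 f * G f e * L2 e) - c * (\<Sum>e\<in>UNIV. K e * L2 e) - d * (\<Sum>e\<in>UNIV. K e * L1 e)"
proof -
  have GK: "(\<Sum>e\<in>UNIV. G f e * kk e) = K f" for f
    by (simp add: K)
  have kG: "(\<Sum>f\<in>UNIV. kk f * G f e) = K e" for e
    by (simp add: K G_sym mult.commute)
  have L1_k: "(\<Sum>f\<in>UNIV. \<Sum>e\<in>UNIV. L1 f * G f e * kk e) = (\<Sum>f\<in>UNIV. L1 f * K f)"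
    by (simp add: mult.assoc sum_distrib_left[symmetric] GK)
  have k_L2: "(\<Sum>f\<in>UNIV. \<Sum>e\<in>UNIV. kk f * G f e * L2 e) = (\<Sum>e\<in>UNIV. K e * L2 e)"
    by (subst sum.swap) (simp add: sum_distrib_right[symmetric] kG)
  have k_k: "(\<Sum>f\<in>UNIV. \<Sum>e\<in>UNIV. kk f * G f e * kk e) = 0"
    by (simp add: mult.assoc sum_distrib_left[symmetric] GK null)
  have "(\<Sum>f\<in>UNIV. \<Sum>e\<in>UNIV. (L1 f - c * kk f) * G f e * (L2 e - d * kk e))
    = (\<Sum>f\<in>UNIV. \<Sum>e\<in>UNIV. L1 f * G f e * L2 e - d * (L1 f * G f e * kk e)
        - c * (kk f * G f e * L2 e) + c * d * (kk f * G f e * kk e))"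
    by (intro sum.cong refl) (simp add: algebra_simps)
  also have "\<dots> = (\<Sum>f\<in>UNIV. \<Sum>e\<in>UNIV. L1 f * G f e * L2 e)
      - d * (\<Sum>f\<in>UNIV. \<Sum>e\<in>UNIV. L1 f * G f e * kk e) - c * (\<Sum>f\<in>UNIV. \<Sum>e\<in>UNIV. kk f * G f e * L2 e)
      + c * d * (\<Sum>f\<in>UNIV. \<Sum>e\<in>UNIV. kk f * G f e * kk e)"
    by (simp only: sum.distrib sum_subtractf sum_distrib_left[symmetric])
  finally show ?thesis unfolding L1_k k_L2 k_k by (simp add: mult.commute)
qed

text \<open>\<open>G + H K\<otimes>K\<close> is the inverse of \<open>g - H k\<otimes>k\<close> when \<open>G = g\<inverse>\<close> and \<open>K = G k\<close> is null.\<close>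

lemma bilinear_kerr_schild:
  fixes L1 L2 kk K :: "'n::finite \<Rightarrow> real" and G :: "'n \<Rightarrow> 'n \<Rightarrow> real"
  assumes G_sym: "\<And>a b. G a b = G b a" and K: "\<And>a. K a = (\<Sum>b\<in>UNIV. G a b * kk b)"
    and null: "(\<Sum>a\<in>UNIV. kk a * K a) = 0"
  shows "(\<Sum>f\<in>UNIV. \<Sum>e\<in>UNIV. (L1 f - c * kk f) * (G f e + Hx * K f * K e) * (L2 e - d * kk e))
    = (\<Sum>f\<in>UNIV. \<Sum>e\<in>UNIV. L1 f * G f e * L2 e) - c * (\<Sum>e\<in>UNIV. K e * L2 e)
      - d * (\<Sum>e\<in>UNIV. K e * L1 e) + Hx * (\<Sum>e\<in>UNIV. K e * L1 e) * (\<Sum>e\<in>UNIV. K e * L2 e)"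
proof -
  have K1: "(\<Sum>f\<in>UNIV. (L1 f - c * kk f) * K f) = (\<Sum>e\<in>UNIV. K e * L1 e)"
    using null by (simp add: algebra_simps sum_subtractf sum_distrib_left[symmetric])
  have K2: "(\<Sum>e\<in>UNIV. K e * (L2 e - d * kk e)) = (\<Sum>e\<in>UNIV. K e * L2 e)"
    using null by (simp add: algebra_simps sum_subtractf sum_distrib_left[symmetric])
  have "(\<Sum>f\<in>UNIV. \<Sum>e\<in>UNIV. (L1 f - c * kk f) * (G f e + Hx * K f * K e) * (L2 e - d * kk e))
    = (\<Sum>f\<in>UNIV. \<Sum>e\<in>UNIV. (L1 f - c * kk f) * G f e * (L2 e - d * kk e)
        + Hx * (((L1 f - c * kk f) * K f) * (K e * (L2 e - d * kk e))))"
    by (intro sum.cong refl) (simp add: algebra_simps)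
  also have "\<dots> = (\<Sum>f\<in>UNIV. \<Sum>e\<in>UNIV. (L1 f - c * kk f) * G f e * (L2 e - d * kk e))
      + Hx * ((\<Sum>f\<in>UNIV. (L1 f - c * kk f) * K f) * (\<Sum>e\<in>UNIV. K e * (L2 e - d * kk e)))"
    by (simp only: sum.distrib sum_distrib_left[symmetric] sum_product)
  finally show ?thesis
    unfolding K1 K2 bilinear_form_shift[OF G_sym K null] by (simp add: algebra_simps)
qed

lemma k_divisible_chr1_product_shift:
  fixes Lh M :: "'n::finite \<Rightarrow> 'n \<Rightarrow> 'n \<Rightarrow> real" and A B :: "'n \<Rightarrow> 'n \<Rightarrow> real"
    and G :: "'n \<Rightarrow> 'n \<Rightarrow> real"
  assumes Lh: "\<And>f n p. Lh f n p = M f n p - kk p * A f n - kk n * B f p"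
  shows "k_divisible kk (\<lambda>p n a b. chr1_product Lh G n p a b - chr1_product M G n p a b)"
proof -
  have "chr1_product Lh G n p a b - chr1_product M G n p a b
      = kk p * - (\<Sum>f\<in>UNIV. \<Sum>e\<in>UNIV. A f n * G f e * Lh e a b)
      + kk n * - (\<Sum>f\<in>UNIV. \<Sum>e\<in>UNIV. B f p * G f e * Lh e a b)
      + kk a * - (\<Sum>f\<in>UNIV. \<Sum>e\<in>UNIV. M f n p * G f e * B e b)
      + kk b * - (\<Sum>f\<in>UNIV. \<Sum>e\<in>UNIV. M f n p * G f e * A e a)" for p n a b
    unfolding chr1_product_def Lh
    by (simp add: sum_distrib_left sum_subtractf[symmetric] sum.distrib[symmetric] sum_negf
        algebra_simps)
  then show ?thesis by (rule k_divisibleI)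
qed

lemma k_divisible_ks_d2:
  "k_divisible kk (\<lambda>p n a b.
     (lower_christoffel (ks_d2 kk Hx dH ddH dk ddk n) p a b - lower_christoffel (ks_d2 kk Hx dH ddH dk ddk b) p a n)
   - (lower_christoffel (\<lambda>c x y. Hx * (dk c x * dk n y + dk n x * dk c y)) p a b
      - lower_christoffel (\<lambda>c x y. Hx * (dk c x * dk b y + dk b x * dk c y)) p a n))"
proof -
  define \<Phi> where "\<Phi> = (\<lambda>n c x. ddH n c * kk x + dH c * dk n x + dH n * dk c x + Hx * ddk n c x)"
  define \<Psi> where "\<Psi> = (\<lambda>n c y. dH c * dk n y + dH n * dk c y + Hx * ddk n c y)"
  show ?thesis
    by (rule k_divisibleI[where Xp = "\<lambda>n a b. 1/2 * (\<Psi> n a b + \<Psi> n b a - \<Psi> b a n - \<Psi> b n a)"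
          and Xn = "\<lambda>p a b. - 1/2 * (\<Phi> b a p - \<Phi> b p a)"
          and Xa = "\<lambda>p n b. 1/2 * (\<Phi> n b p - \<Psi> n p b - \<Phi> b n p + \<Psi> b p n)"
          and Xb = "\<lambda>p n a. 1/2 * (\<Phi> n a p - \<Phi> n p a)"])
      (simp add: \<Phi>_def \<Psi>_def ks_d2_def lower_christoffel_def algebra_simps)
qed

lemma k_divisible_riem_low_kerr_schild:
  fixes kk dH K :: "'n::finite \<Rightarrow> real" and Hx :: real and ddH dk G :: "'n \<Rightarrow> 'n \<Rightarrow> real"
    and ddk L :: "'n \<Rightarrow> 'n \<Rightarrow> 'n \<Rightarrow> real" and dL :: "'n \<Rightarrow> 'n \<Rightarrow> 'n \<Rightarrow> 'n \<Rightarrow> real"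
  assumes G_sym: "\<And>a b. G a b = G b a" and L_sym: "\<And>e a b. L e a b = L e b a"
    and K: "\<And>a. K a = (\<Sum>b\<in>UNIV. G a b * kk b)" and null: "(\<Sum>a\<in>UNIV. kk a * K a) = 0"
  shows "k_divisible kk (\<lambda>p n a b.
      riem_low (\<lambda>p a b. L p a b - lower_christoffel (ks_d1 kk Hx dH dk) p a b)
        (\<lambda>n p a b. dL n p a b - lower_christoffel (ks_d2 kk Hx dH ddH dk ddk n) p a b)
        (\<lambda>f e. G f e + Hx * K f * K e) p n a b
      - riem_low L dL G p n a b
      + 2 * Hx * dk_quadratic (\<lambda>a b. dk a b - (\<Sum>e\<in>UNIV. K e * L e a b)) p n a b)"
proof -
  define Gh where "Gh = (\<lambda>f e. G f e + Hx * K f * K e)"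
  define Lh where "Lh = (\<lambda>p a b. L p a b - lower_christoffel (ks_d1 kk Hx dH dk) p a b)"
  define dLh where "dLh = (\<lambda>n p a b. dL n p a b - lower_christoffel (ks_d2 kk Hx dH ddH dk ddk n) p a b)"
  define M where "M = (\<lambda>f n p. L f n p - Hx/2 * (dk n p + dk p n) * kk f)"
  define A where "A = (\<lambda>f n. 1/2 * (dH n * kk f + Hx * dk n f - dH f * kk n - Hx * dk f n))"
  define B where "B = (\<lambda>f p. 1/2 * (dH p * kk f + Hx * dk p f - Hx * dk f p))"
  define Dm where "Dm = (\<lambda>n. lower_christoffel (\<lambda>c x y. Hx * (dk c x * dk n y + dk n x * dk c y)))"
  define Bs where "Bs = (\<lambda>x y. \<Sum>e\<in>UNIV. K e * L e x y)"
  \<comment> \<open>After projection only \<open>M\<close> matters: the other two terms carry a free factor \<open>k\<close> in a slot.\<close>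
  have Lh_M: "Lh f n p = M f n p - kk p * A f n - kk n * B f p" for f n p
    unfolding Lh_def M_def A_def B_def lower_christoffel_def ks_d1_def by (simp add: algebra_simps)
  have shift: "k_divisible kk (\<lambda>p n a b. chr1_product Lh Gh n p a b - chr1_product M Gh n p a b)"
    using Lh_M by (rule k_divisible_chr1_product_shift)
  have M_product: "chr1_product M Gh n p a b = chr1_product L G n p a b
      - Hx/2 * (dk n p + dk p n) * Bs a b - Hx/2 * (dk a b + dk b a) * Bs n p + Hx * Bs n p * Bs a b"
    for n p a b
    unfolding chr1_product_def M_def Gh_def Bs_def by (rule bilinear_kerr_schild[OF G_sym K null])
  have Bs_sym: "Bs x y = Bs y x" for x y
    unfolding Bs_def by (simp add: L_sym)
  have exact: "riem_low Lh dLh Gh p n a b - riem_low L dL G p n a b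
        + 2 * Hx * dk_quadratic (\<lambda>a b. dk a b - Bs a b) p n a b
      = - ((lower_christoffel (ks_d2 kk Hx dH ddH dk ddk n) p a b
            - lower_christoffel (ks_d2 kk Hx dH ddH dk ddk b) p a n) - (Dm n p a b - Dm b p a n))
        - (chr1_product Lh Gh n p a b - chr1_product M Gh n p a b)
        + (chr1_product Lh Gh b p a n - chr1_product M Gh b p a n)" for p n a b
    unfolding riem_low_def M_product dLh_def Dm_def lower_christoffel_def dk_quadratic_def
    using Bs_sym[of n a] Bs_sym[of p b] Bs_sym[of b a] Bs_sym[of p n] Bs_sym[of b n] Bs_sym[of p a]
    by (simp add: algebra_simps) (simp add: field_simps)
  have "k_divisible kk (\<lambda>p n a b. riem_low Lh dLh Gh p n a b - riem_low L dL G p n a b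
        + 2 * Hx * dk_quadratic (\<lambda>a b. dk a b - Bs a b) p n a b)"
    unfolding exact Dm_def
    by (intro k_divisible_add k_divisible_diff k_divisible_uminus k_divisible_ks_d2 shift
        k_divisible_swap[OF shift])
  then show ?thesis unfolding Gh_def Lh_def dLh_def Bs_def .
qed

lemma contract4_riem_low_kerr_schild:
  fixes kk dH K q v u w :: "'n::finite \<Rightarrow> real" and Hx :: real and ddH dk G :: "'n \<Rightarrow> 'n \<Rightarrow> real"
    and ddk L :: "'n \<Rightarrow> 'n \<Rightarrow> 'n \<Rightarrow> real" and dL :: "'n \<Rightarrow> 'n \<Rightarrow> 'n \<Rightarrow> 'n \<Rightarrow> real"
  assumes G_sym: "\<And>a b. G a b = G b a" and L_sym: "\<And>e a b. L e a b = L e b a"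
    and K: "\<And>a. K a = (\<Sum>b\<in>UNIV. G a b * kk b)" and null: "(\<Sum>a\<in>UNIV. kk a * K a) = 0"
    and q: "(\<Sum>p\<in>UNIV. q p * kk p) = 0" and v: "(\<Sum>p\<in>UNIV. v p * kk p) = 0"
    and u: "(\<Sum>p\<in>UNIV. u p * kk p) = 0" and w: "(\<Sum>p\<in>UNIV. w p * kk p) = 0"
  shows "contract4 q v u w (riem_low (\<lambda>p a b. L p a b - lower_christoffel (ks_d1 kk Hx dH dk) p a b)
           (\<lambda>n p a b. dL n p a b - lower_christoffel (ks_d2 kk Hx dH ddH dk ddk n) p a b)
           (\<lambda>f e. G f e + Hx * K f * K e))
       = contract4 q v u w (riem_low L dL G)
         - 2 * Hx * contract4 q v u w (dk_quadratic (\<lambda>a b. dk a b - (\<Sum>e\<in>UNIV. K e * L e a b)))"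
  using contract4_k_divisible[OF k_divisible_riem_low_kerr_schild[of G L K kk Hx dH dk dL ddH ddk,
        OF G_sym L_sym K null] q v u w]
  unfolding contract4_linear by simp


locale kerr_schild_chart =
  fixes U :: "(real^'n) set"
    and g gh :: "real^'n \<Rightarrow> real^'n^'n"
    and k :: "real^'n \<Rightarrow> real^'n"
    and H :: "real^'n \<Rightarrow> real"
  assumes open_U: "open U"
    and metric_g: "metric_on U g" and metric_gh: "metric_on U gh"
    and smooth_k: "\<forall>a. smooth_on U (\<lambda>y. k y $ a)" and smooth_H: "smooth_on U H"
    and kerr_schild: "\<forall>y\<in>U. \<forall>a b. g y $ a $ b = gh y $ a $ b + H y * (k y $ a) * (k y $ b)"
    and null: "\<forall>y\<in>U. (\<Sum>a\<in>UNIV. \<Sum>b\<in>UNIV. ginv g y a b * k y $ a * k y $ b) = 0"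
begin

definition ks_dterm :: "real^'n \<Rightarrow> 'n \<Rightarrow> 'n \<Rightarrow> 'n \<Rightarrow> real" where
  "ks_dterm y = ks_d1 (\<lambda>a. k y $ a) (H y) (\<lambda>c. pd H c y) (\<lambda>c a. pd (\<lambda>z. k z $ a) c y)"

definition ks_ddterm :: "real^'n \<Rightarrow> 'n \<Rightarrow> 'n \<Rightarrow> 'n \<Rightarrow> 'n \<Rightarrow> real" where
  "ks_ddterm y = ks_d2 (\<lambda>a. k y $ a) (H y) (\<lambda>c. pd H c y) (\<lambda>n c. pd (pd H c) n y)
     (\<lambda>c a. pd (\<lambda>z. k z $ a) c y) (\<lambda>n c a. pd (pd (\<lambda>z. k z $ a) c) n y)"

lemma k_differentiable: "y \<in> U \<Longrightarrow> (\<lambda>z. k z $ a) differentiable (at y)"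
  using smooth_k smooth_on_imp_differentiable by blast

lemma H_differentiable: "y \<in> U \<Longrightarrow> H differentiable (at y)"
  using smooth_H smooth_on_imp_differentiable by blast

lemma pd_k_differentiable: "y \<in> U \<Longrightarrow> pd (\<lambda>z. k z $ a) c differentiable (at y)"
  using smooth_k smooth_on_imp_differentiable smooth_on_pd by blast

lemma pd_H_differentiable: "y \<in> U \<Longrightarrow> pd H c differentiable (at y)"
  using smooth_H smooth_on_imp_differentiable smooth_on_pd by blast

lemma gh_eq: "y \<in> U \<Longrightarrow> gh y $ a $ b = g y $ a $ b - H y * k y $ a * k y $ b"
  using kerr_schild by simp

lemma pd_gh:
  assumes y: "y \<in> U"
  shows "pd (\<lambda>z. gh z $ a $ b) c y = pd (\<lambda>z. g z $ a $ b) c y - ks_dterm y c a b"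
proof -
  have "pd (\<lambda>z. gh z $ a $ b) c y = pd (\<lambda>z. g z $ a $ b - H z * k z $ a * k z $ b) c y"
    by (rule pd_transform_within_open[OF open_U y]) (simp add: gh_eq)
  also have "\<dots> = pd (\<lambda>z. g z $ a $ b) c y - ks_dterm y c a b"
    using y by (simp add: pd_diff pd_mult3 metric_on_differentiable[OF metric_g] H_differentiable
        k_differentiable ks_dterm_def ks_d1_def)
  finally show ?thesis .
qed

lemma chr1_gh: "y \<in> U \<Longrightarrow> chr1 gh y p a b = chr1 g y p a b - lower_christoffel (ks_dterm y) p a b"
  unfolding chr1_def lower_christoffel_def by (simp add: pd_gh algebra_simps)

lemma ks_dterm_differentiable: "x \<in> U \<Longrightarrow> (\<lambda>y. ks_dterm y c a b) differentiable (at x)"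
  unfolding ks_dterm_def ks_d1_def
  by (intro differentiable_add differentiable_mult k_differentiable H_differentiable
      pd_k_differentiable pd_H_differentiable)

lemma pd_ks_dterm:
  assumes x: "x \<in> U"
  shows "pd (\<lambda>y. ks_dterm y c a b) n x = ks_ddterm x n c a b"
proof -
  have d1: "(\<lambda>y. pd H c y * k y $ a * k y $ b) differentiable (at x)"
    and d2: "(\<lambda>y. H y * pd (\<lambda>z. k z $ a) c y * k y $ b) differentiable (at x)"
    and d3: "(\<lambda>y. H y * k y $ a * pd (\<lambda>z. k z $ b) c y) differentiable (at x)"
    using x by (auto intro!: differentiable_mult k_differentiable H_differentiable pd_k_differentiable
        pd_H_differentiable)
  have "pd (\<lambda>y. ks_dterm y c a b) n x = pd (\<lambda>y. pd H c y * k y $ a * k y $ b) n x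
      + pd (\<lambda>y. H y * pd (\<lambda>z. k z $ a) c y * k y $ b) n x
      + pd (\<lambda>y. H y * k y $ a * pd (\<lambda>z. k z $ b) c y) n x"
    unfolding ks_dterm_def ks_d1_def by (simp only: pd_add d1 d2 d3 differentiable_add)
  also have "\<dots> = ks_ddterm x n c a b"
    unfolding pd_mult3[OF pd_H_differentiable[OF x] k_differentiable[OF x] k_differentiable[OF x]]
      pd_mult3[OF H_differentiable[OF x] pd_k_differentiable[OF x] k_differentiable[OF x]]
      pd_mult3[OF H_differentiable[OF x] k_differentiable[OF x] pd_k_differentiable[OF x]]
    by (simp add: ks_ddterm_def ks_d2_def algebra_simps)
  finally show ?thesis .
qed

lemma pd_chr1_gh:
  assumes x: "x \<in> U"
  shows "pd (\<lambda>y. chr1 gh y p a b) n x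
    = pd (\<lambda>y. chr1 g y p a b) n x - lower_christoffel (ks_ddterm x n) p a b"
proof -
  have "pd (\<lambda>y. chr1 gh y p a b) n x
      = pd (\<lambda>y. chr1 g y p a b - lower_christoffel (ks_dterm y) p a b) n x"
    by (rule pd_transform_within_open[OF open_U x]) (simp add: chr1_gh)
  also have "\<dots> = pd (\<lambda>y. chr1 g y p a b) n x - pd (\<lambda>y. lower_christoffel (ks_dterm y) p a b) n x"
    using x by (intro pd_diff chr1_differentiable[OF metric_g] differentiable_lower_christoffel
        ks_dterm_differentiable)
  also have "\<dots> = pd (\<lambda>y. chr1 g y p a b) n x - lower_christoffel (ks_ddterm x n) p a b"
    using x by (simp add: pd_lower_christoffel ks_dterm_differentiable pd_ks_dterm)
  finally show ?thesis .
qed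

lemma ginv_gh:
  assumes x: "x \<in> U"
  shows "ginv gh x f e = ginv g x f e + H x * raise1 g k x f * raise1 g k x e"
proof -
  define G where "G = ginv g x"
  define K where "K = raise1 g k x"
  have gG: "(\<Sum>c\<in>UNIV. g x $ i $ c * G c j) = (if i = j then 1 else 0)" for i j
    unfolding G_def by (rule ginv_right_inverse[OF metric_g x])
  have gK: "(\<Sum>c\<in>UNIV. g x $ i $ c * K c) = k x $ i" for i
  proof -
    have "(\<Sum>c\<in>UNIV. g x $ i $ c * K c) = (\<Sum>c\<in>UNIV. \<Sum>b\<in>UNIV. g x $ i $ c * G c b * k x $ b)"
      unfolding K_def raise1_def G_def by (simp add: sum_distrib_left mult.assoc)
    also have "\<dots> = (\<Sum>b\<in>UNIV. (\<Sum>c\<in>UNIV. g x $ i $ c * G c b) * k x $ b)"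
      by (subst sum.swap) (simp add: sum_distrib_right)
    also have "\<dots> = (\<Sum>b\<in>UNIV. if i = b then k x $ b else 0)"
      by (rule sum.cong[OF refl]) (simp add: gG)
    finally show ?thesis by simp
  qed
  have kG: "(\<Sum>c\<in>UNIV. k x $ c * G c j) = K j" for j
    unfolding K_def raise1_def G_def by (simp add: ginv_symmetric[OF metric_g x] mult.commute)
  have kK: "(\<Sum>c\<in>UNIV. k x $ c * K c) = 0"
    using null x unfolding K_def raise1_def by (simp add: sum_distrib_left algebra_simps)
  have "gh x ** (\<chi> i j. G i j + H x * K i * K j) = mat 1"
  proof -
    have "(\<Sum>c\<in>UNIV. (g x $ i $ c - H x * k x $ i * k x $ c) * (G c j + H x * K c * K j))
      = (\<Sum>c\<in>UNIV. g x $ i $ c * G c j) + (H x * K j) * (\<Sum>c\<in>UNIV. g x $ i $ c * K c)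
        - (H x * k x $ i) * (\<Sum>c\<in>UNIV. k x $ c * G c j)
        - (H x * H x * k x $ i * K j) * (\<Sum>c\<in>UNIV. k x $ c * K c)" for i j
      by (simp add: algebra_simps sum.distrib sum_subtractf sum_distrib_left)
    then show ?thesis
      by (simp add: vec_eq_iff matrix_mul_nth mat_1_nth gh_eq[OF x] gG gK kG kK)
  qed
  then have "matrix_inv (gh x) = (\<chi> i j. G i j + H x * K i * K j)"
    by (rule matrix_inv_unique[OF metric_on_invertible[OF metric_gh x]])
  then show ?thesis by (simp add: ginv_def G_def K_def)
qed

lemma contract4_riem_low_gh:
  assumes x: "x \<in> U"
    and q: "(\<Sum>p\<in>UNIV. q p * k x $ p) = 0" and v: "(\<Sum>p\<in>UNIV. v p * k x $ p) = 0"
    and u: "(\<Sum>p\<in>UNIV. u p * k x $ p) = 0" and w: "(\<Sum>p\<in>UNIV. w p * k x $ p) = 0"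
  shows "contract4 q v u w (riem_low (chr1 gh x) (\<lambda>n p a b. pd (\<lambda>y. chr1 gh y p a b) n x) (ginv gh x))
    = contract4 q v u w (riem_low (chr1 g x) (\<lambda>n p a b. pd (\<lambda>y. chr1 g y p a b) n x) (ginv g x))
      - 2 * H x * contract4 q v u w (dk_quadratic (covd1 g k x))"
proof -
  have chr1: "chr1 gh x = (\<lambda>p a b. chr1 g x p a b - lower_christoffel (ks_dterm x) p a b)"
    using x by (intro ext) (rule chr1_gh)
  have pd_chr1: "(\<lambda>n p a b. pd (\<lambda>y. chr1 gh y p a b) n x)
      = (\<lambda>n p a b. pd (\<lambda>y. chr1 g y p a b) n x - lower_christoffel (ks_ddterm x n) p a b)"
    using x by (intro ext) (rule pd_chr1_gh)
  have ginv: "ginv gh x = (\<lambda>f e. ginv g x f e + H x * raise1 g k x f * raise1 g k x e)"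
    using x by (intro ext) (rule ginv_gh)
  have covd: "covd1 g k x = (\<lambda>a b. pd (\<lambda>z. k z $ b) a x - (\<Sum>e\<in>UNIV. raise1 g k x e * chr1 g x e a b))"
    using x by (intro ext) (rule covd1_eq_chr1[OF metric_g])
  have null_x: "(\<Sum>a\<in>UNIV. k x $ a * raise1 g k x a) = 0"
    using null x unfolding raise1_def by (simp add: sum_distrib_left algebra_simps)
  show ?thesis
    unfolding chr1 pd_chr1 ginv covd ks_dterm_def ks_ddterm_def
    by (rule contract4_riem_low_kerr_schild[OF ginv_symmetric[OF metric_g x]
          chr1_symmetric[OF metric_g open_U x] raise1_def null_x q v u w])
qed

end


theorem lemma4p9:
  fixes U :: "(real^'n) set"
    and g gh :: "real^'n \<Rightarrow> real^'n^'n"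
    and k :: "real^'n \<Rightarrow> real^'n"
    and H :: "real^'n \<Rightarrow> real"
    and h :: "real^'n \<Rightarrow> real^'n^'n"
  assumes "open U"
    and "metric_on U g" and "metric_on U gh"
    and "\<forall>a. smooth_on U (\<lambda>y. k y $ a)" and "smooth_on U H"
    and KS: "\<forall>x\<in>U. \<forall>a b. g x $ a $ b = gh x $ a $ b + H x * (k x $ a) * (k x $ b)"
    and null: "\<forall>x\<in>U. (\<Sum>a\<in>UNIV. \<Sum>b\<in>UNIV. ginv g x a b * k x $ a * k x $ b) = 0"
    and geod: "\<forall>x\<in>U. \<forall>b. (\<Sum>a\<in>UNIV. raise1 g k x a * covd1 g k x a b) = 0"
    and proj: "\<forall>x\<in>U. \<forall>a b. (\<Sum>c\<in>UNIV. h x $ a $ c * h x $ c $ b) = h x $ a $ b"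
    and hsym: "\<forall>x\<in>U. \<forall>a b. (\<Sum>c\<in>UNIV. g x $ a $ c * h x $ c $ b)
                            = (\<Sum>c\<in>UNIV. g x $ b $ c * h x $ c $ a)"
    and hk: "\<forall>x\<in>U. \<forall>b. (\<Sum>a\<in>UNIV. h x $ a $ b * k x $ a) = 0"
    and "x \<in> U"
  shows "(\<Sum>\<mu>\<in>UNIV. \<Sum>\<alpha>\<in>UNIV. \<Sum>\<nu>\<in>UNIV. \<Sum>\<beta>\<in>UNIV.
            riem gh x \<mu> \<alpha> \<nu> \<beta> * h x $ \<delta> $ \<mu> * h x $ \<nu> $ \<gamma> * h x $ \<alpha> $ \<epsilon> * h x $ \<beta> $ \<sigma>)
       = (\<Sum>\<mu>\<in>UNIV. \<Sum>\<alpha>\<in>UNIV. \<Sum>\<nu>\<in>UNIV. \<Sum>\<beta>\<in>UNIV.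
            riem g x \<mu> \<alpha> \<nu> \<beta> * h x $ \<delta> $ \<mu> * h x $ \<nu> $ \<gamma> * h x $ \<alpha> $ \<epsilon> * h x $ \<beta> $ \<sigma>)
         - 2 * H x * (\<Sum>\<tau>\<in>UNIV. \<Sum>\<nu>\<in>UNIV. \<Sum>\<alpha>\<in>UNIV. \<Sum>\<beta>\<in>UNIV.
            (\<Sum>\<rho>\<in>UNIV. h x $ \<delta> $ \<rho> * ginv g x \<rho> \<tau>)
            * h x $ \<nu> $ \<gamma> * h x $ \<alpha> $ \<epsilon> * h x $ \<beta> $ \<sigma>
            * ((1/4) * (covd1 g k x \<nu> \<tau> * covd1 g k x \<alpha> \<beta> - covd1 g k x \<beta> \<tau> * covd1 g k x \<alpha> \<nu>
                        - covd1 g k x \<nu> \<alpha> * covd1 g k x \<tau> \<beta> + covd1 g k x \<beta> \<alpha> * covd1 g k x \<tau> \<nu>)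
             + (1/4) * (covd1 g k x \<nu> \<beta> - covd1 g k x \<beta> \<nu>) * (covd1 g k x \<alpha> \<tau> - covd1 g k x \<tau> \<alpha>)))"
proof -
  interpret kerr_schild_chart U g gh k H
    using assms(1-7) by unfold_locales
  have x: "x \<in> U" by fact
  define q where "q = (\<lambda>p. \<Sum>\<rho>\<in>UNIV. h x $ \<delta> $ \<rho> * ginv g x \<rho> p)"
  have hk_x: "(\<Sum>p\<in>UNIV. h x $ p $ c * k x $ p) = 0" for c
    using hk x by blast
  have h_raise1: "(\<Sum>\<mu>\<in>UNIV. h x $ \<delta> $ \<mu> * raise1 g k x \<mu>) = 0"
    unfolding raise1_def ginv_def
    using metric_on_invertible[OF metric_g x] hk_x hsym x
    by (intro raised_projector_annihilates)
      (auto simp: vec_eq_iff transpose_def matrix_mul_nth metric_on_symmetric[OF metric_g x])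
  have "(\<Sum>p\<in>UNIV. q p * k x $ p) = (\<Sum>p\<in>UNIV. \<Sum>\<rho>\<in>UNIV. h x $ \<delta> $ \<rho> * ginv g x \<rho> p * k x $ p)"
    unfolding q_def by (simp add: sum_distrib_right)
  also have "\<dots> = (\<Sum>\<rho>\<in>UNIV. \<Sum>p\<in>UNIV. h x $ \<delta> $ \<rho> * ginv g x \<rho> p * k x $ p)"
    by (rule sum.swap)
  also have "\<dots> = 0"
    using h_raise1 unfolding raise1_def by (simp add: sum_distrib_left mult.assoc)
  finally have q_k: "(\<Sum>p\<in>UNIV. q p * k x $ p) = 0" .
  have q_gh: "(\<lambda>p. \<Sum>\<mu>\<in>UNIV. h x $ \<delta> $ \<mu> * ginv gh x \<mu> p) = q"
    using h_raise1 x unfolding q_def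
    by (simp add: ginv_gh sum.distrib algebra_simps sum_distrib_left[symmetric])
  show ?thesis
    using contract4_riem_low_gh[OF x q_k hk_x hk_x hk_x]
    unfolding riem_eq_riem_low[OF metric_gh open_U x] riem_eq_riem_low[OF metric_g open_U x]
      contract_first_index_eq_contract4 q_gh
    unfolding q_def contract4_def[of _ _ _ _ "dk_quadratic _"] dk_quadratic_def .
qed

end
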